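(* Let $s^1,\ldots,s^k$ be time series with $s^l=(s^l_1,\ldots,s^l_{m_l})\in\mathbb{Q}^{m_l}$. Define \[ U \coloneqq \max_{\substack{I_1,\ldots,I_k\\ I_l=[a_l,b_l],\ 1\le a_l\le b_l\le m_l}} \frac{\sum_{l\in[k]}\sum_{i\in I_l} s^l_i}{\sum_{l\in[k]}|I_l|},\qquad L \coloneqq \min_{\substack{I_1,\ldots,I_k\\ I_l=[a_l,b_l],\ 1\le a_l\le b_l\le m_l}} \frac{\sum_{l\in[k]}\sum_{i\in I_l} s^l_i}{\sum_{l\in[k]}|I_l|}, \] where $[a,b]=\{a,a+1,\ldots,b\}$. Let $z=(z_1,\ldots,z_n)$ be any mean of $s^1,\ldots,s^k$, i.e. a time series minimizing $F(z)=\frac1k\sum_{l=1}^k \mathrm{dtw}(z,s^l)^2$ over all time series. Then $L\le z_j\le U$ for all $j\in[n]$, and for every $l\in[k]$, \[ \mathrm{dtw}(s^l,z)^2\ \ge\ \sum_{i\in[m_l]} \begin{cases} (s^l_i-U)^2 & \text{if } s^l_i>U,\\ (s^l_i-L)^2 & \text{if } s^l_i<L,\\ 0 & \text{otherwise}.\end{cases} \] In particular $F(z)$ is at least $\frac1k$ times the sum over $l\in[k]$ of the right-hand side.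
   Context: A time series is a finite sequence $s=(s_1,\ldots,s_m)\in\mathbb{Q}^m$ for some $m\in\mathbb{N}$; $[m]=\{1,\ldots,m\}$. For $m,n\in\mathbb{N}$, a warping path of order $m\times n$ is a sequence of pairs $(i_1,j_1),\ldots,(i_p,j_p)\in[m]\times[n]$ with $(i_1,j_1)=(1,1)$, $(i_p,j_p)=(m,n)$, and each step $(i_{t+1},j_{t+1})-(i_t,j_t)\in\{(1,0),(0,1),(1,1)\}$. For time series $s\in\mathbb{Q}^m$, $s'\in\mathbb{Q}^n$, the cost of a warping path $P$ is $C_P(s,s')=\sum_{(i,j)\in P}(s_i-s'_j)^2$, and $\mathrm{dtw}(s,s')=\min_P\sqrt{C_P(s,s')}$ over all warping paths of order $m\times n$ (symmetric in the arguments). The Fréchet function of a sample $s^1,\ldots,s^k$ is $F(z)=\frac1k\sum_{l=1}^k\mathrm{dtw}(z,s^l)^2$, defined on all time series $z$ (of any length); a mean is a minimizer of $F$ (one always exists). *)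

theory Defs
  imports Complex_Main
begin

text \<open>Time series are nonempty lists of rationals, indexed 1-based in the paper;
  entry i (1-based) of s is s ! (i - 1).\<close>

definition warping_path :: "nat \<Rightarrow> nat \<Rightarrow> (nat \<times> nat) list \<Rightarrow> bool" where
  "warping_path m n P \<longleftrightarrow>
     P \<noteq> [] \<and> set P \<subseteq> {1..m} \<times> {1..n} \<and>
     hd P = (1, 1) \<and> last P = (m, n) \<and>
     (\<forall>t. Suc t < length P \<longrightarrow>
        (fst (P ! Suc t), snd (P ! Suc t)) \<in>
          {(fst (P ! t) + 1, snd (P ! t)), (fst (P ! t), snd (P ! t) + 1),
           (fst (P ! t) + 1, snd (P ! t) + 1)})"

definition path_cost :: "(nat \<times> nat) list \<Rightarrow> rat list \<Rightarrow> rat list \<Rightarrow> rat" where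
  "path_cost P s s' = (\<Sum>(i, j) \<leftarrow> P. (s ! (i - 1) - s' ! (j - 1))^2)"

definition dtw :: "rat list \<Rightarrow> rat list \<Rightarrow> real" where
  "dtw s s' = sqrt (Min {real_of_rat (path_cost P s s') | P. warping_path (length s) (length s') P})"

definition frechet :: "rat list list \<Rightarrow> rat list \<Rightarrow> real" where
  "frechet S z = (1 / real (length S)) * (\<Sum>l<length S. (dtw z (S ! l))^2)"

definition is_mean :: "rat list list \<Rightarrow> rat list \<Rightarrow> bool" where
  "is_mean S z \<longleftrightarrow> z \<noteq> [] \<and> (\<forall>y. y \<noteq> [] \<longrightarrow> frechet S z \<le> frechet S y)"

definition interval_avg :: "rat list list \<Rightarrow> (nat \<Rightarrow> nat) \<Rightarrow> (nat \<Rightarrow> nat) \<Rightarrow> rat" where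
  "interval_avg S a b =
     (\<Sum>l<length S. \<Sum>i\<in>{a l..b l}. (S ! l) ! (i - 1)) /
     of_nat (\<Sum>l<length S. card {a l..b l})"

definition valid_intervals :: "rat list list \<Rightarrow> (nat \<Rightarrow> nat) \<Rightarrow> (nat \<Rightarrow> nat) \<Rightarrow> bool" where
  "valid_intervals S a b \<longleftrightarrow> (\<forall>l<length S. 1 \<le> a l \<and> a l \<le> b l \<and> b l \<le> length (S ! l))"

definition upperU :: "rat list list \<Rightarrow> rat" where
  "upperU S = Max {interval_avg S a b | a b. valid_intervals S a b}"

definition lowerL :: "rat list list \<Rightarrow> rat" where
  "lowerL S = Min {interval_avg S a b | a b. valid_intervals S a b}"

definition penalty :: "rat \<Rightarrow> rat \<Rightarrow> rat \<Rightarrow> rat" where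
  "penalty U L x = (if x > U then (x - U)^2 else if x < L then (x - L)^2 else 0)"

end

theory Submission
  imports Defs
begin

(* Fix optimal warping paths from a mean z to every s^l. The entries of s^l matched with z_j
   form an interval I_l, because each row of a warping path is contiguous. Replacing z_j by the
   average c of all these entries keeps the paths admissible and, by the variance decomposition
   of a sum of squares, lowers their total cost by (\<Sum>l |I_l|) (z_j - c)^2; minimality of z
   forces z_j = c, an interval average, so L \<le> z_j \<le> U. For the lower bound, every entry
   s^l_i is matched with some z_j \<in> [L, U], and (s^l_i - z_j)^2 dominates its penalty. *)

lemma warping_path_swap:
  assumes "warping_path m n P"
  shows "warping_path n m (map prod.swap P)"
  using assms unfolding warping_path_def
  by (auto simp: hd_map last_map)

lemma warping_path_sorted:
  assumes "warping_path m n P"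
  shows "sorted (map fst P)" "sorted (map snd P)" "sorted_wrt (<) (map (\<lambda>(i, j). i + j) P)"
proof -
  have step: "fst (P ! t) \<le> fst (P ! Suc t) \<and> snd (P ! t) \<le> snd (P ! Suc t)
      \<and> fst (P ! t) + snd (P ! t) < fst (P ! Suc t) + snd (P ! Suc t)" if "Suc t < length P" for t
    using assms that unfolding warping_path_def by auto
  show "sorted (map fst P)" "sorted (map snd P)"
    using step by (auto simp: sorted_iff_nth_Suc)
  show "sorted_wrt (<) (map (\<lambda>(i, j). i + j) P)"
    using step by (auto simp: sorted_wrt_iff_nth_Suc_transp case_prod_beta)
qed

lemma warping_path_distinct:
  assumes "warping_path m n P"
  shows "distinct P"
  using warping_path_sorted(3)[OF assms] by (auto simp: strict_sorted_iff distinct_map)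

lemma length_warping_path_le:
  assumes "warping_path m n P"
  shows "length P \<le> m + n"
proof -
  let ?d = "\<lambda>(i, j). i + j"
  have "distinct (map ?d P)"
    using warping_path_sorted(3)[OF assms] by (simp add: strict_sorted_iff)
  moreover have "set (map ?d P) \<subseteq> {2..m + n}"
    using assms unfolding warping_path_def by auto
  ultimately have "length P \<le> card {2..m + n}"
    by (metis card_mono distinct_card finite_atLeastAtMost length_map)
  then show ?thesis by simp
qed

lemma finite_warping_paths: "finite {P. warping_path m n P}"
proof (rule finite_subset)
  show "{P. warping_path m n P} \<subseteq> {P. set P \<subseteq> {1..m} \<times> {1..n} \<and> length P \<le> m + n}"
    using length_warping_path_le unfolding warping_path_def by auto
  show "finite {P. set P \<subseteq> {1..m} \<times> {1..n} \<and> length P \<le> m + n}"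
    by (rule finite_lists_length_le) simp
qed

lemma warping_path_exists:
  assumes "1 \<le> m" "1 \<le> n"
  shows "\<exists>P. warping_path m n P"
proof -
  define P where "P = map (\<lambda>t. (min (t + 1) m, max 1 (t + 2 - m))) [0..<m + n - 1]"
  have "P \<noteq> []" "length P = m + n - 1" using assms by (auto simp: P_def)
  then have "hd P = (1, 1)" "last P = (m, n)"
    using assms by (auto simp: hd_conv_nth last_conv_nth P_def)
  moreover have "set P \<subseteq> {1..m} \<times> {1..n}" using assms by (auto simp: P_def)
  moreover have "(fst (P ! Suc t), snd (P ! Suc t)) \<in>
          {(fst (P ! t) + 1, snd (P ! t)), (fst (P ! t), snd (P ! t) + 1),
           (fst (P ! t) + 1, snd (P ! t) + 1)}" if "Suc t < length P" for t
    using that \<open>length P = m + n - 1\<close> by (cases "t + 1 < m") (auto simp: P_def)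
  ultimately show ?thesis using \<open>P \<noteq> []\<close> unfolding warping_path_def by blast
qed

lemma fst_image_warping_path:
  assumes "warping_path m n P"
  shows "fst ` set P = {1..m}"
proof
  show "fst ` set P \<subseteq> {1..m}" using assms unfolding warping_path_def by auto
  show "{1..m} \<subseteq> fst ` set P"
  proof
    fix i assume i: "i \<in> {1..m}"
    let ?f = "\<lambda>t. int (fst (P ! t))"
    have "P \<noteq> []" "?f 0 = 1" "?f (length P - 1) = int m"
      using assms unfolding warping_path_def by (auto simp: hd_conv_nth last_conv_nth)
    moreover have "\<bar>?f (Suc t) - ?f t\<bar> \<le> 1" if "Suc t < length P" for t
      using assms that unfolding warping_path_def by auto
    ultimately obtain t where "t \<le> length P - 1" "fst (P ! t) = i"
      using i nat0_intermed_int_val[of "length P - 1" ?f "int i"] by auto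
    moreover have "0 < length P" using \<open>P \<noteq> []\<close> by simp
    ultimately have "t < length P" "fst (P ! t) = i" by linarith+
    then show "i \<in> fst ` set P" by (metis image_eqI nth_mem)
  qed
qed

lemma warping_path_row_convex:
  assumes wp: "warping_path m n P" and "(i, x) \<in> set P" "(i, y) \<in> set P" "x \<le> c" "c \<le> y"
  shows "(i, c) \<in> set P"
proof -
  obtain t1 t2 where t: "t1 < length P" "P ! t1 = (i, x)" "t2 < length P" "P ! t2 = (i, y)"
    using assms(2,3) unfolding in_set_conv_nth by blast
  note sorted = warping_path_sorted[OF wp]
  show ?thesis
  proof (cases "t1 \<le> t2")
    case False
    then have "y \<le> x" using sorted_nth_mono[OF sorted(2), of t2 t1] t by simp
    then have "c = x" using assms(4,5) by simp
    then show ?thesis using assms(2) by simp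
  next
    case True
    let ?f = "\<lambda>t. int (snd (P ! t))"
    have "\<bar>?f (Suc s) - ?f s\<bar> \<le> 1" if "Suc s < length P" for s
      using wp that unfolding warping_path_def by auto
    then have "\<forall>s. t1 \<le> s \<and> s < t2 \<longrightarrow> \<bar>?f (Suc s) - ?f s\<bar> \<le> 1"
      using t(3) by simp
    moreover have "?f t1 \<le> int c" "int c \<le> ?f t2" using t assms(4,5) by simp_all
    ultimately obtain t where "t1 \<le> t" "t \<le> t2" "?f t = int c"
      using nat_intermed_int_val[of t1 t2 ?f "int c"] True by auto
    moreover have "fst (P ! t1) \<le> fst (P ! t)" "fst (P ! t) \<le> fst (P ! t2)"
      using sorted_nth_mono[OF sorted(1), of t1 t] sorted_nth_mono[OF sorted(1), of t t2]
        \<open>t1 \<le> t\<close> \<open>t \<le> t2\<close> t(3) by simp_all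
    ultimately have "P ! t = (i, c)" using t by (simp add: prod_eq_iff)
    then show ?thesis using \<open>t \<le> t2\<close> t by (metis le_less_trans nth_mem)
  qed
qed

lemma warping_path_row_eq_interval:
  assumes wp: "warping_path m n P" and "1 \<le> i" "i \<le> m"
  obtains a b where "1 \<le> a" "a \<le> b" "b \<le> n" "{j. (i, j) \<in> set P} = {a..b}"
proof -
  define R where "R = {j. (i, j) \<in> set P}"
  have sub: "R \<subseteq> {1..n}" using wp unfolding warping_path_def R_def by auto
  then have fin: "finite R" by (rule finite_subset) simp
  have "R \<noteq> {}" using fst_image_warping_path[OF wp] assms(2,3) unfolding R_def by force
  then have min: "Min R \<in> R" and max: "Max R \<in> R" using fin by simp_all
  have "{Min R..Max R} \<subseteq> R"
  proof
    fix c assume "c \<in> {Min R..Max R}"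
    then show "c \<in> R"
      using warping_path_row_convex[OF wp, of i "Min R" "Max R" c] min max unfolding R_def by simp
  qed
  moreover have "R \<subseteq> {Min R..Max R}" using fin by auto
  ultimately have "R = {Min R..Max R}" by blast
  moreover have "1 \<le> Min R" "Min R \<le> Max R" "Max R \<le> n" using sub min max fin by auto
  ultimately show thesis using that unfolding R_def by blast
qed

lemma path_cost_eq_sum_set:
  assumes "warping_path m n P"
  shows "path_cost P s s' = (\<Sum>(i, j)\<in>set P. (s ! (i - 1) - s' ! (j - 1))^2)"
  unfolding path_cost_def using warping_path_distinct[OF assms]
  by (simp add: sum_list_distinct_conv_sum_set)

lemma path_cost_swap: "path_cost (map prod.swap P) s' s = path_cost P s s'"
  unfolding path_cost_def by (induction P) (auto simp: power2_commute)

lemma path_cost_nonneg: "0 \<le> path_cost P s s'"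
  unfolding path_cost_def by (rule sum_list_nonneg) auto

lemma dtw_commute: "dtw s s' = dtw s' s"
proof -
  have swap: "real_of_rat (path_cost P s s') \<in> {real_of_rat (path_cost Q s' s) | Q. warping_path n m Q}"
    if "warping_path m n P" for P m n and s s' :: "rat list"
    using warping_path_swap[OF that] path_cost_swap[of P s' s]
    by (intro CollectI exI[of _ "map prod.swap P"]) simp
  have "{real_of_rat (path_cost P s s') | P. warping_path (length s) (length s') P}
      = {real_of_rat (path_cost Q s' s) | Q. warping_path (length s') (length s) Q}"
    using swap by blast
  then show ?thesis unfolding dtw_def by simp
qed

lemma dtw_power2_eq_Min:
  assumes "s \<noteq> []" "s' \<noteq> []"
  defines "C \<equiv> {real_of_rat (path_cost P s s') | P. warping_path (length s) (length s') P}"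
  shows "finite C" "C \<noteq> {}" "(dtw s s')^2 = Min C"
proof -
  have "C = (\<lambda>P. real_of_rat (path_cost P s s')) ` {P. warping_path (length s) (length s') P}"
    unfolding C_def by blast
  then show fin: "finite C" using finite_warping_paths by simp
  show ne: "C \<noteq> {}"
    using warping_path_exists[of "length s" "length s'"] assms(1,2) unfolding C_def
    by (simp add: Suc_le_eq)
  have "0 \<le> Min C" using fin ne unfolding C_def by (auto simp: path_cost_nonneg)
  then show "(dtw s s')^2 = Min C" unfolding dtw_def C_def by simp
qed

lemma dtw_power2_le_path_cost:
  assumes "s \<noteq> []" "s' \<noteq> []" "warping_path (length s) (length s') P"
  shows "(dtw s s')^2 \<le> real_of_rat (path_cost P s s')"
  using dtw_power2_eq_Min[OF assms(1,2)] assms(3) by (auto intro: Min_le)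

lemma optimal_warping_path_exists:
  assumes "s \<noteq> []" "s' \<noteq> []"
  obtains P where "warping_path (length s) (length s') P" "(dtw s s')^2 = real_of_rat (path_cost P s s')"
  using Min_in[OF dtw_power2_eq_Min(1,2)[OF assms]] dtw_power2_eq_Min(3)[OF assms] by auto

lemma penalty_nonneg: "0 \<le> penalty U L x"
  by (simp add: penalty_def)

lemma penalty_le_power2_diff:
  assumes "L \<le> y" "y \<le> U"
  shows "penalty U L x \<le> (x - y)^2"
proof -
  consider "U < x" | "x < L" "\<not> U < x" | "\<not> U < x" "\<not> x < L" by linarith
  then show ?thesis
  proof cases
    case 1
    then have "(x - U)^2 \<le> (x - y)^2" using assms by (intro power_mono) auto
    then show ?thesis using 1 by (simp add: penalty_def)
  next
    case 2
    then have "(L - x)^2 \<le> (y - x)^2" using assms by (intro power_mono) auto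
    then show ?thesis using 2 by (simp add: penalty_def power2_commute)
  qed (simp add: penalty_def)
qed

lemma dtw_power2_ge_penalty_sum:
  assumes "s \<noteq> []" "z \<noteq> []" and bounds: "\<forall>j<length z. L \<le> z ! j \<and> z ! j \<le> U"
  shows "real_of_rat (\<Sum>i<length s. penalty U L (s ! i)) \<le> (dtw s z)^2"
proof -
  obtain P where P: "warping_path (length s) (length z) P"
    "(dtw s z)^2 = real_of_rat (path_cost P s z)"
    using optimal_warping_path_exists[OF assms(1,2)] .
  have "(\<Sum>i<length s. penalty U L (s ! i)) = (\<Sum>i\<in>{1..length s}. penalty U L (s ! (i - 1)))"
    by (simp add: sum.atLeast1_atMost_eq)
  also have "\<dots> = (\<Sum>i\<in>fst ` set P. penalty U L (s ! (i - 1)))"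
    by (simp add: fst_image_warping_path[OF P(1)])
  also have "\<dots> \<le> (\<Sum>(i, j)\<in>set P. penalty U L (s ! (i - 1)))"
    using sum_image_le[of "set P" "\<lambda>i. penalty U L (s ! (i - 1))" fst]
    by (simp add: penalty_nonneg case_prod_beta comp_def)
  also have "\<dots> \<le> (\<Sum>(i, j)\<in>set P. (s ! (i - 1) - z ! (j - 1))^2)"
  proof (rule sum_mono, clarify)
    fix i j assume "(i, j) \<in> set P"
    then have "j \<in> {1..length z}" using P(1) unfolding warping_path_def by blast
    then have "j - 1 < length z" by auto
    then show "penalty U L (s ! (i - 1)) \<le> (s ! (i - 1) - z ! (j - 1))^2"
      using bounds penalty_le_power2_diff by blast
  qed
  also have "\<dots> = path_cost P s z" using path_cost_eq_sum_set[OF P(1)] by simp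
  finally show ?thesis using P(2) by (simp add: of_rat_less_eq)
qed

lemma sum_power2_diff_decompose:
  fixes f :: "'a \<Rightarrow> 'b::comm_ring_1"
  assumes "of_nat (card A) * \<mu> = sum f A"
  shows "(\<Sum>x\<in>A. (y - f x)^2) = (\<Sum>x\<in>A. (\<mu> - f x)^2) + of_nat (card A) * (y - \<mu>)^2"
proof -
  have "(\<Sum>x\<in>A. (y - f x)^2) - (\<Sum>x\<in>A. (\<mu> - f x)^2) = (\<Sum>x\<in>A. (y^2 - \<mu>^2) - 2 * (y - \<mu>) * f x)"
    by (simp add: sum_subtractf[symmetric] power2_eq_square algebra_simps)
  also have "\<dots> = of_nat (card A) * (y^2 - \<mu>^2) - 2 * (y - \<mu>) * (of_nat (card A) * \<mu>)"
    by (simp add: sum_subtractf sum_distrib_left assms)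
  also have "\<dots> = of_nat (card A) * (y - \<mu>)^2"
    by (simp add: power2_eq_square algebra_simps)
  finally show ?thesis by (simp add: algebra_simps)
qed

lemma path_cost_list_update:
  assumes wp: "warping_path (length z) (length s) P" and "j < length z"
  shows "path_cost P (z[j := c]) s = path_cost P z s
    + (\<Sum>i\<in>{i. (Suc j, i) \<in> set P}. (c - s ! (i - 1))^2 - (z ! j - s ! (i - 1))^2)"
proof -
  define \<delta> where "\<delta> i = (c - s ! (i - 1))^2 - (z ! j - s ! (i - 1))^2" for i
  have pointwise: "(z[j := c] ! (i - 1) - s ! (k - 1))^2
      = (z ! (i - 1) - s ! (k - 1))^2 + (if i = Suc j then \<delta> k else 0)" if "(i, k) \<in> set P" for i k
  proof -
    have "i \<in> {1..length z}" using wp that unfolding warping_path_def by blast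
    then show ?thesis by (auto simp: nth_list_update \<delta>_def)
  qed
  have "path_cost P (z[j := c]) s
      = (\<Sum>(i, k)\<in>set P. (z ! (i - 1) - s ! (k - 1))^2 + (if i = Suc j then \<delta> k else 0))"
    unfolding path_cost_eq_sum_set[OF wp[folded length_list_update[of z j c]]]
    using pointwise by (intro sum.cong) auto
  also have "\<dots> = path_cost P z s + (\<Sum>p\<in>set P. if fst p = Suc j then \<delta> (snd p) else 0)"
    by (simp add: path_cost_eq_sum_set[OF wp] sum.distrib case_prod_beta)
  also have "(\<Sum>p\<in>set P. if fst p = Suc j then \<delta> (snd p) else 0)
      = (\<Sum>p\<in>Pair (Suc j) ` {i. (Suc j, i) \<in> set P}. \<delta> (snd p))"
    by (simp add: sum.inter_filter[symmetric]) (rule sum.cong; force)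
  also have "\<dots> = (\<Sum>i\<in>{i. (Suc j, i) \<in> set P}. \<delta> i)"
    by (subst sum.reindex) (auto simp: inj_on_def)
  finally show ?thesis unfolding \<delta>_def .
qed

lemma path_costs_list_update_interval_avg:
  assumes "j < length z"
    and wp: "\<And>l. l < length S \<Longrightarrow> warping_path (length z) (length (S ! l)) (P l)"
    and rows: "\<And>l. l < length S \<Longrightarrow> {i. (Suc j, i) \<in> set (P l)} = {a l..b l}"
  defines "c \<equiv> interval_avg S a b"
  shows "(\<Sum>l<length S. path_cost (P l) (z[j := c]) (S ! l))
      + of_nat (\<Sum>l<length S. card {a l..b l}) * (z ! j - c)^2
    = (\<Sum>l<length S. path_cost (P l) z (S ! l))"
proof -
  define A where "A = (SIGMA l:{..<length S}. {a l..b l})"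
  define x where "x = (\<lambda>(l, i). S ! l ! (i - 1))"
  have card: "card A = (\<Sum>l<length S. card {a l..b l})" unfolding A_def by simp
  have sum: "sum x A = (\<Sum>l<length S. \<Sum>i\<in>{a l..b l}. S ! l ! (i - 1))"
    unfolding A_def x_def by (simp add: sum.Sigma)
  have "of_nat (card A) * c = sum x A"
  proof (cases "card A = 0")
    case True
    moreover have "finite A" unfolding A_def by simp
    ultimately have "A = {}" by simp
    then show ?thesis by simp
  next
    case False
    then show ?thesis unfolding c_def interval_avg_def card[symmetric] sum[symmetric] by simp
  qed
  then have "(\<Sum>y\<in>A. (z ! j - x y)^2) = (\<Sum>y\<in>A. (c - x y)^2) + of_nat (card A) * (z ! j - c)^2"
    by (rule sum_power2_diff_decompose)
  then have "(\<Sum>y\<in>A. (c - x y)^2 - (z ! j - x y)^2) + of_nat (card A) * (z ! j - c)^2 = 0"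
    by (simp add: sum_subtractf)
  moreover have "(\<Sum>y\<in>A. (c - x y)^2 - (z ! j - x y)^2)
      = (\<Sum>l<length S. path_cost (P l) (z[j := c]) (S ! l)) - (\<Sum>l<length S. path_cost (P l) z (S ! l))"
    unfolding A_def x_def
    by (simp add: sum.Sigma sum_subtractf[symmetric] path_cost_list_update[OF wp assms(1)] rows case_prod_unfold)
  ultimately show ?thesis unfolding card by simp
qed

lemma finite_interval_avgs: "finite {interval_avg S a b | a b. valid_intervals S a b}"
  \<comment> \<open>only the values of a and b below length S matter, so they can be taken to be bounded lists\<close>
proof (rule finite_subset)
  define B where "B = sum_list (map length S)"
  define X where "X = {xs. set xs \<subseteq> {0..B} \<and> length xs = length S}"
  show "finite ((\<lambda>(as, bs). interval_avg S ((!) as) ((!) bs)) ` (X \<times> X))"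
    unfolding X_def by (simp add: finite_lists_length_eq)
  show "{interval_avg S a b | a b. valid_intervals S a b}
      \<subseteq> (\<lambda>(as, bs). interval_avg S ((!) as) ((!) bs)) ` (X \<times> X)"
  proof clarify
    fix a b assume valid: "valid_intervals S a b"
    have "a l \<le> B \<and> b l \<le> B" if "l < length S" for l
      using elem_le_sum_list[of l "map length S"] valid that
      unfolding B_def valid_intervals_def by fastforce
    then have "map a [0..<length S] \<in> X" "map b [0..<length S] \<in> X"
      unfolding X_def by auto
    moreover have "interval_avg S a b
        = interval_avg S ((!) (map a [0..<length S])) ((!) (map b [0..<length S]))"
      unfolding interval_avg_def by simp
    ultimately show "interval_avg S a b
        \<in> (\<lambda>(as, bs). interval_avg S ((!) as) ((!) bs)) ` (X \<times> X)" by force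
  qed
qed

lemma interval_avg_between:
  assumes "valid_intervals S a b"
  shows "lowerL S \<le> interval_avg S a b" "interval_avg S a b \<le> upperU S"
  using assms finite_interval_avgs[of S] unfolding lowerL_def upperU_def
  by (auto intro: Min_le Max_ge)

lemma frechet_le_path_costs:
  assumes "y \<noteq> []"
    and "\<And>l. l < length S \<Longrightarrow> S ! l \<noteq> [] \<and> warping_path (length y) (length (S ! l)) (P l)"
  shows "frechet S y \<le> 1 / real (length S) * (\<Sum>l<length S. real_of_rat (path_cost (P l) y (S ! l)))"
  unfolding frechet_def using assms dtw_power2_le_path_cost
  by (intro mult_left_mono sum_mono) auto

lemma mean_entry_eq_interval_avg:
  assumes S: "S \<noteq> []" and ne: "\<forall>l<length S. S ! l \<noteq> []" and mean: "is_mean S z"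
    and j: "j < length z"
  obtains a b where "valid_intervals S a b" "z ! j = interval_avg S a b"
proof -
  have z: "z \<noteq> []" using mean unfolding is_mean_def by simp
  have "\<forall>l<length S. \<exists>Q. warping_path (length z) (length (S ! l)) Q
      \<and> (dtw z (S ! l))^2 = real_of_rat (path_cost Q z (S ! l))"
    using optimal_warping_path_exists[OF z] ne by metis
  then obtain P where P: "\<And>l. l < length S \<Longrightarrow> warping_path (length z) (length (S ! l)) (P l)"
    "\<And>l. l < length S \<Longrightarrow> (dtw z (S ! l))^2 = real_of_rat (path_cost (P l) z (S ! l))"
    by metis
  have "\<exists>a b. 1 \<le> a \<and> a \<le> b \<and> b \<le> length (S ! l) \<and> {i. (Suc j, i) \<in> set (P l)} = {a..b}"
    if "l < length S" for l
    by (rule warping_path_row_eq_interval[OF P(1)[OF that], of "Suc j"]) (use j in auto)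
  then obtain a b where ab: "\<And>l. l < length S \<Longrightarrow> 1 \<le> a l \<and> a l \<le> b l \<and> b l \<le> length (S ! l)"
    "\<And>l. l < length S \<Longrightarrow> {i. (Suc j, i) \<in> set (P l)} = {a l..b l}"
    by metis
  have valid: "valid_intervals S a b" using ab(1) unfolding valid_intervals_def by blast
  define c where "c = interval_avg S a b"
  define N where "N = (\<Sum>l<length S. card {a l..b l})"
  have "card {a 0..b 0} \<le> N" unfolding N_def using S by (intro member_le_sum) auto
  then have "0 < N" using ab(1)[of 0] S by (simp, linarith)
  have "frechet S z \<le> frechet S (z[j := c])" using mean z unfolding is_mean_def by simp
  also have "\<dots> \<le> 1 / real (length S) * (\<Sum>l<length S. real_of_rat (path_cost (P l) (z[j := c]) (S ! l)))"
    using frechet_le_path_costs[of "z[j := c]" S P] z ne P(1) by simp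
  finally have "(\<Sum>l<length S. path_cost (P l) z (S ! l))
      \<le> (\<Sum>l<length S. path_cost (P l) (z[j := c]) (S ! l))"
    using S by (simp add: frechet_def P(2) of_rat_sum[symmetric] of_rat_less_eq divide_le_cancel)
  then have "of_nat N * (z ! j - c)^2 \<le> 0"
    using path_costs_list_update_interval_avg[OF j P(1) ab(2)] unfolding c_def N_def by simp
  then have "z ! j = c" using \<open>0 < N\<close> by (simp add: mult_le_0_iff)
  then show thesis using that valid unfolding c_def by blast
qed

theorem mainTheorem1:
  fixes S :: "rat list list" and z :: "rat list"
  assumes "S \<noteq> []"
    and "\<forall>l<length S. S ! l \<noteq> []"
    and "is_mean S z"
  shows "(\<forall>j<length z. lowerL S \<le> z ! j \<and> z ! j \<le> upperU S)
    \<and> (\<forall>l<length S. (dtw (S ! l) z)^2 \<ge>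
          real_of_rat (\<Sum>i<length (S ! l). penalty (upperU S) (lowerL S) ((S ! l) ! i)))
    \<and> frechet S z \<ge> (1 / real (length S)) *
          (\<Sum>l<length S. real_of_rat
             (\<Sum>i<length (S ! l). penalty (upperU S) (lowerL S) ((S ! l) ! i)))"
proof -
  have z: "z \<noteq> []" using assms(3) unfolding is_mean_def by simp
  have bounds: "\<forall>j<length z. lowerL S \<le> z ! j \<and> z ! j \<le> upperU S"
    using mean_entry_eq_interval_avg[OF assms] interval_avg_between by metis
  have lower: "\<forall>l<length S. (dtw (S ! l) z)^2 \<ge>
      real_of_rat (\<Sum>i<length (S ! l). penalty (upperU S) (lowerL S) ((S ! l) ! i))"
    using dtw_power2_ge_penalty_sum[OF _ z bounds] assms(2) by blast
  then have "frechet S z \<ge> (1 / real (length S)) *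
      (\<Sum>l<length S. real_of_rat (\<Sum>i<length (S ! l). penalty (upperU S) (lowerL S) ((S ! l) ! i)))"
    unfolding frechet_def by (intro mult_left_mono sum_mono) (auto simp: dtw_commute)
  with bounds lower show ?thesis by blast
qed

end
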